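(* Let $(X,\rho)$ be a metric space, $(A_k)\subset CL(X)$, $A\in CL(X)$ and let $f\colon[0,\infty)\to[0,\infty)$ be a modulus. If $(A_k)$ is Wijsman strongly Cesàro summable to $A$, then $(A_k)$ is Wijsman strongly Cesàro summable to $A$ with respect to $f$.
   Context: A modulus is a function $f\colon[0,\infty)\to[0,\infty)$ such that $f(x)=0$ iff $x=0$, $f$ is subadditive, increasing and continuous. $CL(X)$ denotes the set of all non-empty closed subsets of $(X,\rho)$, and $d(x,B)=\inf_{y\in B}\rho(x,y)$. $(A_k)$ is Wijsman strongly Cesàro summable to $A$ if $\lim_{n\to\infty}\frac1n\sum_{k=1}^n|d(x,A_k)-d(x,A)|=0$ for every $x\in X$; it is Wijsman strongly Cesàro summable to $A$ with respect to $f$ if $\lim_{n\to\infty}\frac1n\sum_{k=1}^n f(|d(x,A_k)-d(x,A)|)=0$ for every $x\in X$. *)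

theory Defs
  imports "HOL-Analysis.Analysis"
begin

definition modulus :: "(real \<Rightarrow> real) \<Rightarrow> bool" where
  "modulus f \<longleftrightarrow>
     (\<forall>x\<ge>0. f x \<ge> 0) \<and>
     (\<forall>x\<ge>0. f x = 0 \<longleftrightarrow> x = 0) \<and>
     (\<forall>x\<ge>0. \<forall>y\<ge>0. f (x + y) \<le> f x + f y) \<and>
     (\<forall>x\<ge>0. \<forall>y\<ge>0. x \<le> y \<longrightarrow> f x \<le> f y) \<and>
     continuous_on {0..} f"

definition CL :: "'a::metric_space set set" where
  "CL = {B. B \<noteq> {} \<and> closed B}"

definition wijsman_strongly_cesaro :: "(nat \<Rightarrow> 'a::metric_space set) \<Rightarrow> 'a set \<Rightarrow> bool" where
  "wijsman_strongly_cesaro As A \<longleftrightarrow>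
     (\<forall>x. (\<lambda>n. (1 / real n) * (\<Sum>k=1..n. \<bar>infdist x (As k) - infdist x A\<bar>)) \<longlonglongrightarrow> 0)"

definition wijsman_strongly_cesaro_mod ::
    "(real \<Rightarrow> real) \<Rightarrow> (nat \<Rightarrow> 'a::metric_space set) \<Rightarrow> 'a set \<Rightarrow> bool" where
  "wijsman_strongly_cesaro_mod f As A \<longleftrightarrow>
     (\<forall>x. (\<lambda>n. (1 / real n) * (\<Sum>k=1..n. f \<bar>infdist x (As k) - infdist x A\<bar>)) \<longlonglongrightarrow> 0)"

end

theory Submission
  imports Defs
begin

text \<open>A modulus grows at most linearly: subadditivity gives \<open>f n \<le> n f 1\<close>, and continuity at 0
  absorbs small arguments, so for every \<open>\<epsilon> > 0\<close> there is \<open>C\<close> with \<open>f t \<le> \<epsilon> + C t\<close>.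
  Averaging this over \<open>k \<le> n\<close> bounds the Cesaro mean of \<open>f \<circ> g\<close> by
  \<open>\<epsilon> + C \<cdot> mean(g)\<close>, which is eventually below \<open>2\<epsilon>\<close>.\<close>

definition cesaro_mean :: "(nat \<Rightarrow> real) \<Rightarrow> nat \<Rightarrow> real" where
  "cesaro_mean a n = (1 / real n) * (\<Sum>k=1..n. a k)"

lemma modulus_of_nat_le:
  assumes "modulus f"
  shows "f (real n) \<le> real n * f 1"
proof (induction n)
  case 0
  then show ?case using assms unfolding modulus_def by auto
next
  case (Suc n)
  have "f (real n + 1) \<le> f (real n) + f 1"
    using assms unfolding modulus_def by auto
  then show ?case using Suc by (simp add: algebra_simps)
qed

lemma modulus_le_add_linear:
  assumes "modulus f" and "e > 0"
  obtains C where "C \<ge> 0" and "\<And>t. t \<ge> 0 \<Longrightarrow> f t \<le> e + C * t"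
proof -
  have cont: "continuous_on {0..} f" and f0: "f 0 = 0" and f1: "f 1 \<ge> 0"
    and mono: "\<And>x y. 0 \<le> x \<Longrightarrow> x \<le> y \<Longrightarrow> f x \<le> f y"
    using assms(1) unfolding modulus_def by auto
  obtain d where d: "d > 0" "\<And>t. t \<in> {0..} \<Longrightarrow> dist t 0 < d \<Longrightarrow> dist (f t) (f 0) < e"
    using cont assms(2) unfolding continuous_on_iff by (meson atLeast_iff order_refl)
  define C where "C = f 1 * (1 + 1 / d)"
  have C0: "C \<ge> 0" unfolding C_def using f1 d by simp
  have "f t \<le> e + C * t" if t: "t \<ge> 0" for t
  proof (cases "t < d")
    case True
    then have "\<bar>f t\<bar> < e" using d t f0 by (simp add: dist_real_def)
    then show ?thesis using C0 t by (smt (verit) mult_nonneg_nonneg)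
  next
    case False
    have t_le_ceil: "t \<le> real (nat \<lceil>t\<rceil>)" and ceil_le: "real (nat \<lceil>t\<rceil>) \<le> t + 1"
      using t by (simp_all add: le_nat_iff ceiling_le_iff)
    have "f t \<le> f (real (nat \<lceil>t\<rceil>))" using mono t t_le_ceil by auto
    also have "\<dots> \<le> real (nat \<lceil>t\<rceil>) * f 1" by (rule modulus_of_nat_le[OF assms(1)])
    also have "\<dots> \<le> (t + t / d) * f 1"
    proof -
      have "1 \<le> t / d" using False d by simp
      then show ?thesis using ceil_le f1 by (intro mult_right_mono) auto
    qed
    also have "\<dots> = C * t" unfolding C_def using d by (simp add: field_simps)
    finally show ?thesis using assms(2) by simp
  qed
  with C0 show thesis by (rule that)
qed

lemma cesaro_mean_modulus_tendsto_zero: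
  assumes "modulus f" and g_nonneg: "\<And>k. g k \<ge> 0" and lim: "cesaro_mean g \<longlonglongrightarrow> 0"
  shows "cesaro_mean (\<lambda>k. f (g k)) \<longlonglongrightarrow> 0"
proof (rule order_tendstoI)
  have f_nonneg: "\<And>t. t \<ge> 0 \<Longrightarrow> f t \<ge> 0" using assms(1) unfolding modulus_def by auto
  have "cesaro_mean (\<lambda>k. f (g k)) n \<ge> 0" for n
    unfolding cesaro_mean_def using f_nonneg g_nonneg by (simp add: sum_nonneg)
  then show "eventually (\<lambda>n. a < cesaro_mean (\<lambda>k. f (g k)) n) sequentially" if "a < 0" for a
    using that by (intro always_eventually allI) (meson less_le_trans)
  show "eventually (\<lambda>n. cesaro_mean (\<lambda>k. f (g k)) n < r) sequentially" if r: "0 < r" for r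
  proof -
    obtain C where C: "C \<ge> 0" "\<And>t. t \<ge> 0 \<Longrightarrow> f t \<le> r / 2 + C * t"
      using modulus_le_add_linear[OF assms(1), of "r / 2"] r by auto
    have bound: "cesaro_mean (\<lambda>k. f (g k)) n \<le> r / 2 + C * cesaro_mean g n" for n
    proof (cases "n = 0")
      case False
      have "(\<Sum>k=1..n. f (g k)) \<le> (\<Sum>k=1..n. r / 2 + C * g k)"
        using C(2) g_nonneg by (intro sum_mono) auto
      also have "\<dots> = real n * (r / 2) + C * (\<Sum>k=1..n. g k)"
        by (simp add: sum.distrib sum_distrib_left)
      also have "\<dots> = real n * (r / 2 + C * cesaro_mean g n)"
        using False by (simp add: cesaro_mean_def field_simps)
      finally have "(\<Sum>k=1..n. f (g k)) / real n \<le> r / 2 + C * cesaro_mean g n"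
        using False by (simp add: pos_divide_le_eq mult.commute)
      then show ?thesis by (simp add: cesaro_mean_def)
    qed (use r in \<open>simp add: cesaro_mean_def\<close>)
    have "(\<lambda>n. r / 2 + C * cesaro_mean g n) \<longlonglongrightarrow> r / 2 + C * 0"
      by (intro tendsto_intros lim)
    then have "eventually (\<lambda>n. r / 2 + C * cesaro_mean g n < r) sequentially"
      using r by (auto intro: order_tendstoD(2))
    then show ?thesis
      by eventually_elim (rule le_less_trans[OF bound])
  qed
qed

theorem theorem4p3:
  fixes As :: "nat \<Rightarrow> 'a::metric_space set" and A :: "'a set" and f :: "real \<Rightarrow> real"
  assumes "\<forall>k. As k \<in> CL" and "A \<in> CL" and "modulus f"
    and "wijsman_strongly_cesaro As A"
  shows "wijsman_strongly_cesaro_mod f As A"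
  unfolding wijsman_strongly_cesaro_mod_def
proof
  fix x
  let ?g = "\<lambda>k. \<bar>infdist x (As k) - infdist x A\<bar>"
  have "cesaro_mean ?g \<longlonglongrightarrow> 0"
    using assms(4) unfolding wijsman_strongly_cesaro_def cesaro_mean_def[abs_def] by (rule spec)
  then have "cesaro_mean (\<lambda>k. f (?g k)) \<longlonglongrightarrow> 0"
    by (rule cesaro_mean_modulus_tendsto_zero[OF assms(3) abs_ge_zero])
  then show "(\<lambda>n. (1 / real n) * (\<Sum>k=1..n. f (?g k))) \<longlonglongrightarrow> 0"
    unfolding cesaro_mean_def[abs_def] .
qed

end
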